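(* Let $G=(V,E)$ be a $k$-edge-connected graph ($k>0$) and $\phi^*>0$. Suppose every induced subgraph $G[S]$ with $|S|\ge 2$ that is $k/20$-edge-connected and $1/4$-dense in $G$ satisfies $\phi(G[S])<\phi^*$. Then for every nonempty $U\subseteq V$, $$\log_2|U|\ \ge\ \frac{3/10-\phi_G(U)}{2\phi^*}.$$
   Context: Graphs are finite, undirected, unweighted, loopless, possibly with parallel edges; $k$-edge-connected means every cut $(S,\overline S)$, $\emptyset\ne S\subsetneq V$, has at least $k$ edges. For a graph $H$ and $S\subseteq V(H)$: $\partial_H(S)$ is the number of edges leaving $S$, $d_H(S)$ the sum of $H$-degrees of vertices in $S$, $\phi_H(S)=\partial_H(S)/d_H(S)$, and $\phi(H)=\min_{\emptyset\ne S\subsetneq V(H)}\partial_H(S)/\min\{d_H(S),d_H(V(H)\setminus S)\}$. An induced subgraph $H$ of $G$ is $\lambda$-dense if $d_H(v)\ge\lambda\,d_G(v)$ for every vertex $v$ of $H$. *)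

theory Defs
  imports Complex_Main
begin

text \<open>A finite loopless multigraph is given by a finite vertex set V and a
  symmetric edge-multiplicity function m (number of parallel edges between u and v).\<close>

definition multigraph :: "'a set \<Rightarrow> ('a \<Rightarrow> 'a \<Rightarrow> nat) \<Rightarrow> bool" where
  "multigraph V m \<longleftrightarrow> finite V \<and> (\<forall>u v. m u v = m v u) \<and> (\<forall>v. m v v = 0)
     \<and> (\<forall>u v. m u v \<noteq> 0 \<longrightarrow> u \<in> V \<and> v \<in> V)"

definition deg :: "'a set \<Rightarrow> ('a \<Rightarrow> 'a \<Rightarrow> nat) \<Rightarrow> 'a \<Rightarrow> nat" where
  "deg V m v = (\<Sum>u\<in>V. m v u)"

definition vol :: "'a set \<Rightarrow> ('a \<Rightarrow> 'a \<Rightarrow> nat) \<Rightarrow> 'a set \<Rightarrow> nat" where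
  "vol V m S = (\<Sum>v\<in>S. deg V m v)"

definition boundary :: "'a set \<Rightarrow> ('a \<Rightarrow> 'a \<Rightarrow> nat) \<Rightarrow> 'a set \<Rightarrow> nat" where
  "boundary V m S = (\<Sum>u\<in>S. \<Sum>w\<in>V - S. m u w)"

definition edge_connected :: "'a set \<Rightarrow> ('a \<Rightarrow> 'a \<Rightarrow> nat) \<Rightarrow> real \<Rightarrow> bool" where
  "edge_connected V m k \<longleftrightarrow>
     (\<forall>S. S \<noteq> {} \<and> S \<subset> V \<longrightarrow> real (boundary V m S) \<ge> k)"

definition cond_set :: "'a set \<Rightarrow> ('a \<Rightarrow> 'a \<Rightarrow> nat) \<Rightarrow> 'a set \<Rightarrow> real" where
  "cond_set V m S = real (boundary V m S) / real (vol V m S)"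

definition conductance :: "'a set \<Rightarrow> ('a \<Rightarrow> 'a \<Rightarrow> nat) \<Rightarrow> real" where
  "conductance V m = Min ((\<lambda>S. real (boundary V m S) /
       real (min (vol V m S) (vol V m (V - S)))) ` {S. S \<noteq> {} \<and> S \<subset> V})"

text \<open>Induced subgraph G[S] (vertex set S, multiplicities restricted) is \<lambda>-dense in G.\<close>
definition dense :: "'a set \<Rightarrow> ('a \<Rightarrow> 'a \<Rightarrow> nat) \<Rightarrow> 'a set \<Rightarrow> real \<Rightarrow> bool" where
  "dense V m S l \<longleftrightarrow> (\<forall>v\<in>S. real (deg S m v) \<ge> l * real (deg V m v))"

end

theory Submission
  imports Defs
begin

text \<open>Minimise the potential \<open>F(X) = 2\<phi>* log\<^sub>2|X| + (\<partial>\<^sub>G(X) - k/10) / d\<^sub>G(X)\<close> over nonempty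
  \<open>X \<subseteq> V\<close>. Since \<open>\<phi>\<^sub>G(U) \<ge> F(U) - 2\<phi>* log\<^sub>2|U|\<close>, it suffices that the minimum is at least \<open>3/10\<close>.
  If a minimiser \<open>U\<^sub>0\<close> had \<open>F(U\<^sub>0) < 3/10\<close>, then \<open>U\<^sub>0\<close> is no singleton (degrees are at least \<open>k\<close>,
  so singletons have \<open>F \<ge> 9/10\<close>), \<open>U\<^sub>0\<close> is \<open>1/4\<close>-dense (deleting a vertex of small inner degree
  would lower \<open>F\<close>), and \<open>G[U\<^sub>0]\<close> has no cut \<open>S\<close> with
  \<open>\<partial>\<^sub>U\<^sub>0(S) < k/20 + \<phi>* min(d\<^sub>G(S), d\<^sub>G(U\<^sub>0 - S))\<close>: splitting along it gains at least
  \<open>2\<phi>* min(d\<^sub>G(S), d\<^sub>G(U\<^sub>0 - S))\<close> in the volume-weighted logarithms, which pays for the new boundary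
  \<open>2\<partial>\<^sub>U\<^sub>0(S) - k/10\<close>, so one side would have smaller potential. Hence \<open>G[U\<^sub>0]\<close> is
  \<open>k/20\<close>-edge-connected, its conductance is below \<open>\<phi>*\<close> by hypothesis, and a sparsest cut of
  \<open>G[U\<^sub>0]\<close> is a cut of the excluded kind.\<close>

section \<open>Degrees, volumes and boundaries\<close>

lemma deg_mono:
  assumes "finite V" "U \<subseteq> V"
  shows "deg U m v \<le> deg V m v"
  unfolding deg_def using assms by (intro sum_mono2) auto

lemma vol_mono:
  assumes "finite V" "U \<subseteq> V"
  shows "vol U m S \<le> vol V m S"
  unfolding vol_def using deg_mono[OF assms] by (intro sum_mono) auto

lemma vol_Diff:
  assumes "finite U" "S \<subseteq> U"
  shows "vol V m U = vol V m S + vol V m (U - S)"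
  unfolding vol_def using assms by (metis sum.subset_diff add.commute)

lemma vol_pos:
  assumes "finite S" "S \<noteq> {}" "\<And>v. v \<in> S \<Longrightarrow> 0 < deg V m v"
  shows "0 < vol V m S"
proof -
  obtain v where "v \<in> S" using assms(2) by blast
  then show ?thesis
    unfolding vol_def using assms by (intro sum_pos2[of _ v]) auto
qed

lemma boundary_singleton:
  assumes "finite V" "v \<in> V" "m v v = 0"
  shows "boundary V m {v} = deg V m v"
  using sum.remove[OF assms(1,2), of "m v"] assms(3) by (simp add: boundary_def deg_def)

lemma boundary_Diff:
  assumes fin: "finite V" and sym: "\<And>u v. m u v = m v u" and SU: "S \<subseteq> U" and UV: "U \<subseteq> V"
  shows "boundary V m S + boundary V m (U - S) = boundary V m U + 2 * boundary U m S"
proof -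
  have fU: "finite U" using fin UV finite_subset by blast
  have fS: "finite S" using fU SU finite_subset by blast
  define a where "a = (\<Sum>u\<in>S. \<Sum>w\<in>V - U. m u w)"
  define b where "b = (\<Sum>u\<in>U - S. \<Sum>w\<in>V - U. m u w)"
  define c where "c = (\<Sum>u\<in>S. \<Sum>w\<in>U - S. m u w)"
  have e1: "V - S = (V - U) \<union> (U - S)" using SU UV by blast
  have "boundary V m S = a + c"
    unfolding boundary_def a_def c_def e1
    by (subst sum.union_disjoint) (use fin fU in \<open>auto simp: sum.distrib\<close>)
  moreover have "boundary V m (U - S) = b + c"
  proof -
    have e2: "V - (U - S) = (V - U) \<union> S" using SU UV by blast
    have "(\<Sum>u\<in>U - S. \<Sum>w\<in>S. m u w) = c"
      unfolding c_def by (subst sum.swap) (simp add: sym)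
    then show ?thesis
      unfolding boundary_def b_def e2
      by (subst sum.union_disjoint) (use fin fU fS SU in \<open>auto simp: sum.distrib\<close>)
  qed
  moreover have "boundary V m U = a + b"
  proof -
    have "U = S \<union> (U - S)" using SU by blast
    then have "boundary V m U = (\<Sum>u\<in>S \<union> (U - S). \<Sum>w\<in>V - U. m u w)"
      unfolding boundary_def by simp
    also have "\<dots> = a + b" unfolding a_def b_def
      by (rule sum.union_disjoint) (use fU fS in auto)
    finally show ?thesis .
  qed
  moreover have "boundary U m S = c" unfolding boundary_def c_def by simp
  ultimately show ?thesis by simp
qed

lemma boundary_remove_vertex:
  assumes fin: "finite V" and sym: "\<And>u v. m u v = m v u" and loop: "\<And>v. m v v = 0"
    and vU: "v \<in> U" and UV: "U \<subseteq> V"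
  shows "boundary V m (U - {v}) + deg V m v = boundary V m U + 2 * deg U m v"
proof -
  have fU: "finite U" using fin UV finite_subset by blast
  have "U - (U - {v}) = {v}" using vU by blast
  then have "boundary V m (U - {v}) + boundary V m {v} = boundary V m U + 2 * boundary U m (U - {v})"
    using boundary_Diff[OF fin sym, of "U - {v}" U] UV by auto
  moreover have "boundary V m {v} = deg V m v"
    using boundary_singleton[of V v m] fin loop vU UV by auto
  moreover have "boundary U m (U - {v}) = deg U m v"
  proof -
    have "boundary U m (U - {v}) = (\<Sum>u\<in>U - {v}. m v u)"
      unfolding boundary_def \<open>U - (U - {v}) = {v}\<close> by (simp add: sym)
    also have "\<dots> = deg U m v"
      using sum.remove[OF fU vU, of "m v"] loop by (simp add: deg_def)
    finally show ?thesis .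
  qed
  ultimately show ?thesis by simp
qed

lemma edge_connected_deg_ge:
  assumes "multigraph V m" "edge_connected V m k" "card V \<ge> 2" "v \<in> V"
  shows "k \<le> real (deg V m v)"
proof -
  have "{v} \<noteq> {} \<and> {v} \<subset> V" using assms(3,4) by auto
  then have "k \<le> real (boundary V m {v})" using assms(2) unfolding edge_connected_def by blast
  moreover have "boundary V m {v} = deg V m v"
    using assms(1,4) by (intro boundary_singleton) (simp_all add: multigraph_def)
  ultimately show ?thesis by simp
qed

lemma conductance_less_imp_sparse_cut:
  assumes "finite U" "card U \<ge> 2" "conductance U m < c" "\<And>v. v \<in> U \<Longrightarrow> 0 < deg U m v"
  obtains S where "S \<noteq> {}" "S \<subset> U"
    "real (boundary U m S) < c * min (real (vol U m S)) (real (vol U m (U - S)))"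
proof -
  define cuts where "cuts = {S. S \<noteq> {} \<and> S \<subset> U}"
  define ratio where
    "ratio S = real (boundary U m S) / real (min (vol U m S) (vol U m (U - S)))" for S
  obtain v where "v \<in> U" using assms(2) by fastforce
  then have "{v} \<in> cuts" unfolding cuts_def using assms(2) by auto
  moreover have "finite cuts"
    unfolding cuts_def using assms(1) by (rule rev_finite_subset[OF finite_Pow_iff[THEN iffD2]]) auto
  ultimately have "Min (ratio ` cuts) \<in> ratio ` cuts" by (intro Min_in) auto
  moreover have "conductance U m = Min (ratio ` cuts)"
    unfolding conductance_def ratio_def cuts_def ..
  ultimately obtain S where S: "S \<in> cuts" and "ratio S = conductance U m" by auto
  then have "ratio S < c" using assms(3) by simp
  have "S \<noteq> {}" "S \<subset> U" using S unfolding cuts_def by auto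
  have "finite S" using \<open>S \<subset> U\<close> assms(1) finite_subset by blast
  have "0 < vol U m S"
    by (rule vol_pos[OF \<open>finite S\<close> \<open>S \<noteq> {}\<close>]) (use \<open>S \<subset> U\<close> assms(4) in blast)
  moreover have "0 < vol U m (U - S)"
    by (rule vol_pos) (use assms(1,4) \<open>S \<subset> U\<close> in auto)
  ultimately have "0 < min (real (vol U m S)) (real (vol U m (U - S)))" by simp
  then show ?thesis
    using that \<open>S \<noteq> {}\<close> \<open>S \<subset> U\<close> \<open>ratio S < c\<close> unfolding ratio_def of_nat_min
    by (simp add: divide_less_eq)
qed

lemma dense_conductance_less_imp_sparse_cut:
  assumes "finite V" "U \<subseteq> V" "card U \<ge> 2" "dense V m U l" "0 < l" "0 \<le> c"
    and "conductance U m < c" and deg_pos: "\<And>v. v \<in> V \<Longrightarrow> 0 < deg V m v"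
  obtains S where "S \<noteq> {}" "S \<subset> U"
    "real (boundary U m S) < c * min (real (vol V m S)) (real (vol V m (U - S)))"
proof -
  have "finite U" using assms(1,2) finite_subset by blast
  have "0 < deg U m v" if "v \<in> U" for v
  proof -
    have "0 < l * real (deg V m v)" using deg_pos[of v] that assms(2,5) by auto
    also have "\<dots> \<le> real (deg U m v)" using assms(4) that unfolding dense_def by blast
    finally show ?thesis by simp
  qed
  then obtain S where "S \<noteq> {}" "S \<subset> U"
    and "real (boundary U m S) < c * min (real (vol U m S)) (real (vol U m (U - S)))"
    using conductance_less_imp_sparse_cut[OF \<open>finite U\<close> \<open>card U \<ge> 2\<close> \<open>conductance U m < c\<close>] by blast
  moreover have "c * min (real (vol U m S)) (real (vol U m (U - S)))
      \<le> c * min (real (vol V m S)) (real (vol V m (U - S)))"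
    using vol_mono[OF assms(1,2)] \<open>0 \<le> c\<close> by (intro mult_left_mono min.mono) auto
  ultimately show ?thesis using that by simp
qed

section \<open>The potential\<close>

lemma weighted_log_split_le:
  fixes x y :: nat and a b :: real
  assumes "0 < x" "0 < y" "0 < a" "0 < b"
  shows "a * (log 2 x - log 2 (x + y)) + b * (log 2 y - log 2 (x + y)) \<le> - min a b"
proof -
  have half: "log 2 p - log 2 (p + q) \<le> -1" if "0 < p" "p \<le> q" for p q :: nat
  proof -
    have "log 2 (2 * real p) \<le> log 2 (real (p + q))" using that by simp
    moreover have "log 2 (2 * real p) = 1 + log 2 p" using that by (simp add: log_mult)
    ultimately show ?thesis by simp
  qed
  have nonpos_x: "a * (log 2 x - log 2 (x + y)) \<le> 0" and nonpos_y: "b * (log 2 y - log 2 (x + y)) \<le> 0"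
    using assms by (auto intro: mult_nonneg_nonpos)
  show ?thesis
  proof (cases "x \<le> y")
    case True
    then have "a * (log 2 x - log 2 (x + y)) \<le> - a"
      using mult_left_mono[OF half[of x y]] assms by simp
    then show ?thesis using nonpos_y by linarith
  next
    case False
    then have "b * (log 2 y - log 2 (x + y)) \<le> - b"
      using mult_left_mono[OF half[of y x]] assms by (simp add: add.commute)
    then show ?thesis using nonpos_x by linarith
  qed
qed

definition potential :: "real \<Rightarrow> real \<Rightarrow> 'a set \<Rightarrow> ('a \<Rightarrow> 'a \<Rightarrow> nat) \<Rightarrow> 'a set \<Rightarrow> real" where
  "potential c t V m X = 2 * c * log 2 (card X) + (real (boundary V m X) - t) / real (vol V m X)"

lemma potential_singleton_ge:
  assumes "finite V" "v \<in> V" "m v v = 0" "0 < deg V m v" "10 * t \<le> real (deg V m v)"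
  shows "9/10 \<le> potential c t V m {v}"
proof -
  have "t / real (deg V m v) \<le> 1/10" using assms(4,5) by (simp add: divide_le_eq)
  then show ?thesis
    using assms boundary_singleton[of V v m] by (simp add: potential_def vol_def diff_divide_distrib)
qed

lemma potential_remove_vertex_less:
  assumes G: "multigraph V m" and "0 < c" and UV: "U \<subseteq> V" and vU: "v \<in> U" and "card U \<ge> 2"
    and pos: "0 < vol V m (U - {v})"
    and low: "real (deg U m v) < 1/4 * real (deg V m v)"
    and excess: "real (boundary V m U) - t \<le> real (vol V m U) / 2"
  shows "potential c t V m (U - {v}) < potential c t V m U"
proof -
  have fin: "finite V" using G unfolding multigraph_def by simp
  then have fU: "finite U" using UV finite_subset by blast
  define D where "D = real (vol V m U)"
  define d where "d = real (deg V m v)"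
  define N where "N = real (boundary V m U) - t"
  have "0 < d" using low unfolding d_def by linarith
  have vol_rem: "real (vol V m (U - {v})) = D - d"
    using vol_Diff[OF fU, of "{v}" V m] vU unfolding D_def d_def vol_def by simp
  have "real (boundary V m (U - {v})) = real (boundary V m U) + 2 * real (deg U m v) - d"
    using boundary_remove_vertex[of V m v U] G vU UV
    unfolding multigraph_def d_def by (simp add: of_nat_add[symmetric] del: of_nat_add)
  then have num: "real (boundary V m (U - {v})) - t \<le> N - d / 2"
    using low unfolding N_def d_def by simp
  have "0 < D - d" using pos vol_rem by simp
  \<comment> \<open>the excess drops by at least \<open>d/2\<close> and the volume by \<open>d\<close>; this lowers the ratio
    as long as the excess is at most half the volume\<close>
  have "(N - d / 2) * D \<le> N * (D - d)"
    using mult_right_mono[OF excess \<open>0 < d\<close>[THEN less_imp_le]] unfolding N_def D_def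
    by (simp add: algebra_simps)
  then have "(N - d / 2) / (D - d) \<le> N / D"
    using \<open>0 < D - d\<close> \<open>0 < d\<close> by (simp add: divide_le_eq le_divide_eq mult.commute)
  moreover have "(real (boundary V m (U - {v})) - t) / (D - d) \<le> (N - d / 2) / (D - d)"
    using num \<open>0 < D - d\<close> by (simp add: divide_right_mono)
  moreover have "log 2 (card (U - {v})) < log 2 (card U)"
    using vU fU \<open>card U \<ge> 2\<close> by simp
  then have "2 * c * log 2 (card (U - {v})) < 2 * c * log 2 (card U)"
    using \<open>0 < c\<close> by simp
  ultimately show ?thesis
    unfolding potential_def vol_rem N_def D_def by linarith
qed

lemma potential_split_less:
  assumes G: "multigraph V m" and "0 < c" and UV: "U \<subseteq> V" and "S \<noteq> {}" and SU: "S \<subset> U"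
    and pos: "0 < vol V m S" "0 < vol V m (U - S)"
    and sparse: "real (boundary U m S) < t / 2 + c * min (real (vol V m S)) (real (vol V m (U - S)))"
  shows "potential c t V m S < potential c t V m U \<or> potential c t V m (U - S) < potential c t V m U"
proof -
  have fin: "finite V" and sym: "\<And>u v. m u v = m v u" using G unfolding multigraph_def by auto
  have fU: "finite U" using fin UV finite_subset by blast
  have fS: "finite S" using fU SU finite_subset by blast
  define d1 where "d1 = real (vol V m S)"
  define d2 where "d2 = real (vol V m (U - S))"
  define L where "L X = log 2 (real (card X))" for X :: "'a set"
  define B where "B X = real (boundary V m X)" for X
  have "0 < d1" "0 < d2" using pos unfolding d1_def d2_def by auto
  have vol_U: "real (vol V m U) = d1 + d2"
    using vol_Diff[OF fU, of S V m] SU unfolding d1_def d2_def by simp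
  have bd: "B S + B (U - S) = B U + 2 * real (boundary U m S)"
    using arg_cong[OF boundary_Diff[OF fin sym, of S U], of real] SU UV unfolding B_def by simp
  have "card U = card S + card (U - S)"
    using SU fS by (metis card_Diff_subset card_mono fU le_add_diff_inverse psubset_imp_subset)
  moreover have "0 < card S" "0 < card (U - S)" using \<open>S \<noteq> {}\<close> SU fS fU by auto
  ultimately have logs: "d1 * (L S - L U) + d2 * (L (U - S) - L U) \<le> - min d1 d2"
    using weighted_log_split_le[OF _ _ \<open>0 < d1\<close> \<open>0 < d2\<close>] unfolding L_def by simp
  have weighted: "X * potential c t V m Y = 2 * c * X * L Y + (B Y - t)"
    if "X = real (vol V m Y)" "0 < X" for X Y
    using that unfolding potential_def L_def B_def by (simp add: field_simps)
  have "d1 * potential c t V m S + d2 * potential c t V m (U - S) - (d1 + d2) * potential c t V m U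
      = 2 * c * (d1 * (L S - L U) + d2 * (L (U - S) - L U)) + 2 * real (boundary U m S) - t"
    using weighted[of d1 S] weighted[of d2 "U - S"] weighted[of "d1 + d2" U] bd vol_U
      \<open>0 < d1\<close> \<open>0 < d2\<close> unfolding d1_def d2_def by (simp add: algebra_simps)
  also have "\<dots> < 0"
    using mult_left_mono[OF logs, of "2 * c"] \<open>0 < c\<close> sparse unfolding d1_def d2_def by simp
  finally have saving: "d1 * potential c t V m S + d2 * potential c t V m (U - S)
      < (d1 + d2) * potential c t V m U" by simp
  show ?thesis
  proof (rule ccontr)
    assume "\<not> ?thesis"
    then have "d1 * potential c t V m U \<le> d1 * potential c t V m S"
      and "d2 * potential c t V m U \<le> d2 * potential c t V m (U - S)"
      using \<open>0 < d1\<close> \<open>0 < d2\<close> by (simp_all add: mult_left_mono)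
    then show False using saving by (simp add: algebra_simps)
  qed
qed

section \<open>Minimisers of the potential\<close>

lemma potential_minimiser_sparse_cut_free:
  assumes G: "multigraph V m" and "0 < c" and deg_pos: "\<And>v. v \<in> V \<Longrightarrow> 0 < deg V m v"
    and minimiser: "is_arg_min (potential c t V m) (\<lambda>X. X \<in> Pow V - {{}}) U"
    and "S \<noteq> {}" "S \<subset> U"
  shows "t / 2 + c * min (real (vol V m S)) (real (vol V m (U - S))) \<le> real (boundary U m S)"
proof (rule ccontr)
  assume sparse: "\<not> ?thesis"
  have "U \<subseteq> V" using minimiser by (simp add: is_arg_min_def)
  moreover have "finite V" using G by (simp add: multigraph_def)
  ultimately have "finite U" by (rule finite_subset)
  have "finite S" using \<open>finite U\<close> \<open>S \<subset> U\<close> finite_subset by blast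
  have "0 < vol V m S"
    by (rule vol_pos[OF \<open>finite S\<close> \<open>S \<noteq> {}\<close>]) (use \<open>S \<subset> U\<close> \<open>U \<subseteq> V\<close> deg_pos in blast)
  moreover have "U - S \<noteq> {}" using \<open>S \<subset> U\<close> by blast
  then have "0 < vol V m (U - S)"
    by (rule vol_pos[OF finite_Diff[OF \<open>finite U\<close>]]) (use \<open>U \<subseteq> V\<close> deg_pos in blast)
  moreover have "real (boundary U m S) < t / 2 + c * min (real (vol V m S)) (real (vol V m (U - S)))"
    using sparse by linarith
  ultimately have "potential c t V m S < potential c t V m U \<or> potential c t V m (U - S) < potential c t V m U"
    by (rule potential_split_less[OF G \<open>0 < c\<close> \<open>U \<subseteq> V\<close> \<open>S \<noteq> {}\<close> \<open>S \<subset> U\<close>])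
  moreover have "S \<subseteq> V" "U - S \<subseteq> V" using \<open>S \<subset> U\<close> \<open>U \<subseteq> V\<close> by auto
  with minimiser \<open>S \<noteq> {}\<close> \<open>U - S \<noteq> {}\<close>
  have "potential c t V m U \<le> potential c t V m S" "potential c t V m U \<le> potential c t V m (U - S)"
    by (simp_all add: is_arg_min_linorder)
  ultimately show False by linarith
qed

lemma potential_minimiser_dense:
  assumes G: "multigraph V m" and "0 < c" and deg_pos: "\<And>v. v \<in> V \<Longrightarrow> 0 < deg V m v"
    and minimiser: "is_arg_min (potential c t V m) (\<lambda>X. X \<in> Pow V - {{}}) U"
    and "card U \<ge> 2"
    and excess: "real (boundary V m U) - t \<le> real (vol V m U) / 2"
  shows "dense V m U (1/4)"
  unfolding dense_def
proof (intro ballI, rule ccontr)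
  fix v assume "v \<in> U" and "\<not> 1/4 * real (deg V m v) \<le> real (deg U m v)"
  have "U \<subseteq> V" using minimiser by (simp add: is_arg_min_def)
  have "finite U" using G \<open>U \<subseteq> V\<close> finite_subset by (auto simp: multigraph_def)
  then have "card (U - {v}) \<ge> 1" using \<open>v \<in> U\<close> \<open>card U \<ge> 2\<close> by simp
  then have "U - {v} \<noteq> {}" by (metis card.empty not_one_le_zero)
  have "0 < vol V m (U - {v})"
    by (rule vol_pos[OF finite_Diff[OF \<open>finite U\<close>] \<open>U - {v} \<noteq> {}\<close>])
      (use \<open>U \<subseteq> V\<close> deg_pos in blast)
  moreover have "real (deg U m v) < 1/4 * real (deg V m v)" using \<open>\<not> _ \<le> _\<close> by linarith
  ultimately have "potential c t V m (U - {v}) < potential c t V m U"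
    using potential_remove_vertex_less[OF G \<open>0 < c\<close> \<open>U \<subseteq> V\<close> \<open>v \<in> U\<close> \<open>card U \<ge> 2\<close> _ _ excess]
    by blast
  moreover have "U - {v} \<subseteq> V" using \<open>U \<subseteq> V\<close> by blast
  with minimiser \<open>U - {v} \<noteq> {}\<close> have "potential c t V m U \<le> potential c t V m (U - {v})"
    by (simp add: is_arg_min_linorder)
  ultimately show False by linarith
qed

lemma potential_minimiser_ge:
  fixes k :: nat
  assumes G: "multigraph V m" and "card V \<ge> 2" and "0 < k" and conn: "edge_connected V m (real k)"
    and "0 < c"
    and hyp: "\<forall>S. S \<subseteq> V \<and> card S \<ge> 2 \<and> edge_connected S m (real k / 20) \<and> dense V m S (1/4)
            \<longrightarrow> conductance S m < c"
    and minimiser: "is_arg_min (potential c (real k / 10) V m) (\<lambda>X. X \<in> Pow V - {{}}) U"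
  shows "3/10 \<le> potential c (real k / 10) V m U"
proof (rule ccontr)
  assume low: "\<not> ?thesis"
  have fin: "finite V" and loop: "\<And>v. m v v = 0" using G by (auto simp: multigraph_def)
  have "U \<subseteq> V" "U \<noteq> {}" using minimiser by (auto simp: is_arg_min_def)
  then have "finite U" using fin finite_subset by blast
  have deg_ge: "real k \<le> real (deg V m v)" if "v \<in> V" for v
    using edge_connected_deg_ge[OF G conn \<open>card V \<ge> 2\<close> that] .
  then have deg_pos: "0 < deg V m v" if "v \<in> V" for v
    using that \<open>0 < k\<close> by (metis of_nat_0_less_iff order_less_le_trans)
  have "card U \<ge> 2"
  proof (rule ccontr)
    assume "\<not> card U \<ge> 2"
    then have "card U = 1" using \<open>finite U\<close> \<open>U \<noteq> {}\<close> card_gt_0_iff[of U] by linarith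
    then obtain v where "U = {v}" by (rule card_1_singletonE)
    then show False
      using potential_singleton_ge[OF fin _ loop deg_pos, of v "real k / 10" c] deg_ge[of v]
        low \<open>U \<subseteq> V\<close> by simp
  qed
  have "0 \<le> 2 * c * log 2 (card U)" using \<open>card U \<ge> 2\<close> \<open>0 < c\<close> by simp
  then have "(real (boundary V m U) - real k / 10) / real (vol V m U) < 3/10"
    using low unfolding potential_def by linarith
  moreover have "0 < vol V m U"
    by (rule vol_pos[OF \<open>finite U\<close> \<open>U \<noteq> {}\<close>]) (use \<open>U \<subseteq> V\<close> deg_pos in blast)
  ultimately have "real (boundary V m U) - real k / 10 \<le> real (vol V m U) / 2"
    by (simp add: divide_less_eq)
  then have "dense V m U (1/4)"
    using potential_minimiser_dense[OF G \<open>0 < c\<close> deg_pos minimiser \<open>card U \<ge> 2\<close>] by simp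
  have no_sparse_cut: "real k / 20 + c * min (real (vol V m S)) (real (vol V m (U - S)))
      \<le> real (boundary U m S)" if "S \<noteq> {}" "S \<subset> U" for S
    using potential_minimiser_sparse_cut_free[OF G \<open>0 < c\<close> deg_pos minimiser that] by simp
  have "edge_connected U m (real k / 20)"
    unfolding edge_connected_def
  proof (intro allI impI)
    fix S assume "S \<noteq> {} \<and> S \<subset> U"
    moreover have "0 \<le> c * min (real (vol V m S)) (real (vol V m (U - S)))" using \<open>0 < c\<close> by simp
    ultimately show "real k / 20 \<le> real (boundary U m S)" using no_sparse_cut[of S] by linarith
  qed
  then have "conductance U m < c"
    using hyp \<open>U \<subseteq> V\<close> \<open>card U \<ge> 2\<close> \<open>dense V m U (1/4)\<close> by blast
  moreover have "(0::real) < 1/4" "0 \<le> c" using \<open>0 < c\<close> by simp_all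
  ultimately obtain S where "S \<noteq> {}" "S \<subset> U"
    and "real (boundary U m S) < c * min (real (vol V m S)) (real (vol V m (U - S)))"
    using dense_conductance_less_imp_sparse_cut[OF fin \<open>U \<subseteq> V\<close> \<open>card U \<ge> 2\<close> \<open>dense V m U (1/4)\<close>]
      deg_pos by blast
  then show False using no_sparse_cut[of S] by simp
qed

theorem mainTheorem10:
  fixes V :: "'a set" and m :: "'a \<Rightarrow> 'a \<Rightarrow> nat" and k :: nat and phistar :: real
  assumes "multigraph V m"
    and "card V \<ge> 2"
    and "k > 0"
    and "edge_connected V m (real k)"
    and "phistar > 0"
    and "\<forall>S. S \<subseteq> V \<and> card S \<ge> 2 \<and> edge_connected S m (real k / 20) \<and> dense V m S (1/4)
            \<longrightarrow> conductance S m < phistar"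
  shows "\<forall>U. U \<noteq> {} \<and> U \<subseteq> V \<longrightarrow>
           log 2 (real (card U)) \<ge> (3/10 - cond_set V m U) / (2 * phistar)"
proof (intro allI impI)
  let ?F = "potential phistar (real k / 10) V m"
  fix U assume U: "U \<noteq> {} \<and> U \<subseteq> V"
  have "finite (Pow V - {{}})" "V \<in> Pow V - {{}}"
    using assms(1,2) by (auto simp: multigraph_def)
  then obtain U\<^sub>0 where min: "is_arg_min ?F (\<lambda>X. X \<in> Pow V - {{}}) U\<^sub>0"
    using ex_is_arg_min_if_finite[of "Pow V - {{}}" ?F] by auto
  then have "3/10 \<le> ?F U\<^sub>0"
    using potential_minimiser_ge[OF assms] by blast
  also have "?F U\<^sub>0 \<le> ?F U"
    using min U by (simp add: is_arg_min_linorder)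
  also have "?F U \<le> 2 * phistar * log 2 (card U) + cond_set V m U"
    unfolding potential_def cond_set_def by (simp add: divide_right_mono)
  finally show "log 2 (real (card U)) \<ge> (3/10 - cond_set V m U) / (2 * phistar)"
    using assms(5) by (simp add: divide_le_eq mult.commute)
qed

end
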